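(* Let $\Sigma=(X,\mathcal D,\phi)$ be an RFC system. If there is a bounded uniformly globally weakly attractive set $\mathcal A\subset X$, then $\Sigma$ is Lagrange stable.
   Context: $\mathbb R_+=[0,\infty)$. A system is a triple $\Sigma=(X,\mathcal D,\phi)$ where $(X,\|\cdot\|)$ is a normed linear space; $D$ is a nonempty subset of some normed linear space; $\mathcal D$ is a set of functions $d:\mathbb R_+\to D$ closed under time shifts $d\mapsto d(\cdot+\tau)$, $\tau\ge0$, and under concatenation ($d(s)=d_1(s)$ for $s\in[0,t]$, $d(s)=d_2(s-t)$ for $s>t$, any $d_1,d_2\in\mathcal D$, $t>0$); and $\phi:\mathbb R_+\times X\times\mathcal D\to X$ is an everywhere defined map with $\phi(0,x,d)=x$; $\phi(t,x,d)=\phi(t,x,\tilde d)$ whenever $d=\tilde d$ on $[0,t]$; $t\mapsto\phi(t,x,d)$ continuous; and $\phi(h,\phi(t,x,d),d(t+\cdot))=\phi(t+h,x,d)$ for all $t,h\ge0$. $\|x\|_{\mathcal A}=\inf_{y\in\mathcal A}\|x-y\|$. $\mathcal K_\infty$: continuous strictly increasing unbounded $\gamma:\mathbb R_+\to\mathbb R_+$ with $\gamma(0)=0$. $\Sigma$ is RFC if for all $C,\tau>0$: $\sup\{\|\phi(t,x,d)\|:\|x\|\le C,d\in\mathcal D,t\in[0,\tau]\}<\infty$. $\mathcal A$ is uniformly globally weakly attractive if for all $\varepsilon,r>0$ there is $\tau$ such that for all $x$ with $\|x\|_{\mathcal A}\le r$ and all $d\in\mathcal D$ there exists $t\le\tau$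 with $\|\phi(t,x,d)\|_{\mathcal A}\le\varepsilon$. $\Sigma$ is Lagrange stable if there is a bounded set $\mathcal B\subset X$, $\sigma\in\mathcal K_\infty$ and $c>0$ with $\|\phi(t,x,d)\|_{\mathcal B}\le\sigma(\|x\|_{\mathcal B})+c$ for all $x\in X,t\ge0,d\in\mathcal D$ (equivalently, with $\mathcal B=\{0\}$). *)

theory Defs
  imports "HOL-Analysis.Analysis"
begin

text \<open>Time domain R_+ is modelled by real, only values at s \<ge> 0 matter.
  Inputs are functions real \<Rightarrow> 'd, the input value set is Dv, the input class is DD.\<close>

definition is_system ::
  "'d::real_normed_vector set \<Rightarrow> (real \<Rightarrow> 'd) set \<Rightarrow> (real \<Rightarrow> 'x::real_normed_vector \<Rightarrow> (real \<Rightarrow> 'd) \<Rightarrow> 'x) \<Rightarrow> bool"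
where
  "is_system Dv DD \<phi> \<longleftrightarrow>
     Dv \<noteq> {} \<and>
     (\<forall>d\<in>DD. \<forall>s\<ge>0. d s \<in> Dv) \<and>
     (\<forall>d\<in>DD. \<forall>\<tau>\<ge>0. (\<lambda>s. d (s + \<tau>)) \<in> DD) \<and>
     (\<forall>d1\<in>DD. \<forall>d2\<in>DD. \<forall>t>0. (\<lambda>s. if s \<le> t then d1 s else d2 (s - t)) \<in> DD) \<and>
     (\<forall>x d. \<phi> 0 x d = x) \<and>
     (\<forall>t\<ge>0. \<forall>x. \<forall>d\<in>DD. \<forall>d'\<in>DD. (\<forall>s\<in>{0..t}. d s = d' s) \<longrightarrow> \<phi> t x d = \<phi> t x d') \<and>
     (\<forall>x. \<forall>d\<in>DD. continuous_on {0..} (\<lambda>t. \<phi> t x d)) \<and>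
     (\<forall>x. \<forall>d\<in>DD. \<forall>t\<ge>0. \<forall>h\<ge>0. \<phi> h (\<phi> t x d) (\<lambda>s. d (t + s)) = \<phi> (t + h) x d)"

definition RFC :: "(real \<Rightarrow> 'd) set \<Rightarrow> (real \<Rightarrow> 'x::real_normed_vector \<Rightarrow> (real \<Rightarrow> 'd) \<Rightarrow> 'x) \<Rightarrow> bool"
where
  "RFC DD \<phi> \<longleftrightarrow> (\<forall>C>0. \<forall>\<tau>>0. \<exists>M. \<forall>x. \<forall>d\<in>DD. \<forall>t\<in>{0..\<tau>}.
      norm x \<le> C \<longrightarrow> norm (\<phi> t x d) \<le> M)"

definition UGWA :: "(real \<Rightarrow> 'd) set \<Rightarrow> (real \<Rightarrow> 'x::real_normed_vector \<Rightarrow> (real \<Rightarrow> 'd) \<Rightarrow> 'x) \<Rightarrow> 'x set \<Rightarrow> bool"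
where
  "UGWA DD \<phi> A \<longleftrightarrow> (\<forall>\<epsilon>>0. \<forall>r>0. \<exists>\<tau>. \<forall>x. \<forall>d\<in>DD.
      infdist x A \<le> r \<longrightarrow> (\<exists>t\<in>{0..\<tau>}. infdist (\<phi> t x d) A \<le> \<epsilon>))"

definition K_inf :: "(real \<Rightarrow> real) \<Rightarrow> bool" where
  "K_inf \<gamma> \<longleftrightarrow> continuous_on {0..} \<gamma> \<and> strict_mono_on {0..} \<gamma> \<and> \<gamma> 0 = 0 \<and>
     (\<forall>M. \<exists>s\<ge>0. \<gamma> s > M)"

definition lagrange_stable :: "(real \<Rightarrow> 'd) set \<Rightarrow> (real \<Rightarrow> 'x::real_normed_vector \<Rightarrow> (real \<Rightarrow> 'd) \<Rightarrow> 'x) \<Rightarrow> bool"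
where
  "lagrange_stable DD \<phi> \<longleftrightarrow> (\<exists>B \<sigma> c. bounded B \<and> B \<noteq> {} \<and> K_inf \<sigma> \<and> c > 0 \<and>
      (\<forall>x. \<forall>t\<ge>0. \<forall>d\<in>DD. infdist (\<phi> t x d) B \<le> \<sigma> (infdist x B) + c))"

end

theory Submission imports Defs begin

text \<open>From the 1-neighbourhood S of A, RFC bounds the state after time 1, so uniform weak
  attractivity brings every trajectory starting in S back to S within a fixed time T, and not
  before time 1. Chaining these returns, RFC on [0, T] bounds the whole forward orbit of S by a
  single constant. A trajectory from the ball of radius c enters S within a time depending only
  on c, so all reachable sets from bounded sets are bounded. A \<open>\<K>\<^sub>\<infinity>\<close> function dominating
  these bounds on every interval [k+1, k+2] then yields Lagrange stability with respect to {0}.\<close>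

definition ramp_sum :: "(nat \<Rightarrow> real) \<Rightarrow> real \<Rightarrow> real" where
  "ramp_sum b s = s + (\<Sum>n<nat \<lceil>s\<rceil>. b n * max 0 (min 1 (s - real n)))"

lemma ramp_sum_eq:
  assumes "s \<le> real N"
  shows "ramp_sum b s = s + (\<Sum>n<N. b n * max 0 (min 1 (s - real n)))"
proof -
  have sub: "{..<nat \<lceil>s\<rceil>} \<subseteq> {..<N}"
    using assms by (auto simp: nat_le_iff ceiling_le_iff)
  have "(\<Sum>n<N. b n * max 0 (min 1 (s - real n))) = (\<Sum>n<nat \<lceil>s\<rceil>. b n * max 0 (min 1 (s - real n)))"
    by (rule sum.mono_neutral_right[OF _ sub]) (auto simp: not_less nat_le_iff ceiling_le_iff)
  then show ?thesis by (simp add: ramp_sum_def)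
qed

lemma continuous_on_ramp_sum: "continuous_on UNIV (ramp_sum b)"
proof -
  have "continuous_on {..<real N} (ramp_sum b)" for N
  proof -
    have "continuous_on {..<real N} (\<lambda>s. s + (\<Sum>n<N. b n * max 0 (min 1 (s - real n))))"
      by (intro continuous_intros)
    then show ?thesis
      by (rule continuous_on_cong[THEN iffD1, rotated 2]) (auto intro!: ramp_sum_eq[symmetric])
  qed
  then have "continuous_on (\<Union>N. {..<real N}) (ramp_sum b)"
    by (intro continuous_on_open_UN) auto
  moreover have "(\<Union>N. {..<real N}) = UNIV"
    by (auto intro: reals_Archimedean2)
  ultimately show ?thesis by simp
qed

lemma ramp_sum_strict_mono:
  assumes "\<And>n. b n \<ge> 0" and "s < t"
  shows "ramp_sum b s < ramp_sum b t"
proof -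
  obtain N where N: "t \<le> real N" by (meson real_arch_simple)
  have "(\<Sum>n<N. b n * max 0 (min 1 (s - real n))) \<le> (\<Sum>n<N. b n * max 0 (min 1 (t - real n)))"
    using assms by (intro sum_mono mult_left_mono) auto
  moreover have "ramp_sum b s = s + (\<Sum>n<N. b n * max 0 (min 1 (s - real n)))"
    using assms(2) N by (intro ramp_sum_eq) auto
  moreover have "ramp_sum b t = t + (\<Sum>n<N. b n * max 0 (min 1 (t - real n)))"
    using N by (rule ramp_sum_eq)
  ultimately show ?thesis using assms(2) by linarith
qed

lemma K_inf_ramp_sum:
  assumes "\<And>n. b n \<ge> 0"
  shows "K_inf (ramp_sum b)"
proof -
  have ge: "ramp_sum b s \<ge> s" if "s \<ge> 0" for s
    using assms by (simp add: ramp_sum_def sum_nonneg)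
  have "\<exists>s\<ge>0. ramp_sum b s > M" for M
    using ge[of "max 0 (M + 1)"] by (intro exI[where x = "max 0 (M + 1)"]) auto
  then show ?thesis
    using continuous_on_subset[OF continuous_on_ramp_sum] ramp_sum_strict_mono[OF assms]
    unfolding K_inf_def by (auto simp: strict_mono_on_def ramp_sum_def)
qed

lemma ramp_sum_ge_coeff:
  assumes "\<And>n. b n \<ge> 0" and "real k + 1 \<le> s"
  shows "b k \<le> ramp_sum b s"
proof -
  obtain N where N: "s \<le> real N" by (meson real_arch_simple)
  have "b k = b k * max 0 (min 1 (s - real k))" using assms by simp
  also have "\<dots> \<le> (\<Sum>n<N. b n * max 0 (min 1 (s - real n)))"
    using assms N by (intro member_le_sum) auto
  finally show ?thesis using N assms by (simp add: ramp_sum_eq)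
qed

lemma K_inf_nonneg:
  assumes "K_inf \<sigma>" and "0 \<le> s"
  shows "0 \<le> \<sigma> s"
proof (cases "s = 0")
  case False
  then have "0 < s" using assms(2) by simp
  then have "\<sigma> 0 < \<sigma> s"
    using assms(1) unfolding K_inf_def strict_mono_on_def by (meson atLeast_iff less_imp_le order_refl)
  then show ?thesis using assms unfolding K_inf_def by simp
qed (use assms in \<open>simp add: K_inf_def\<close>)

lemma K_inf_majorant:
  fixes R :: "real \<Rightarrow> real \<Rightarrow> bool"
  assumes "\<And>c. \<exists>K. \<forall>r v. R r v \<longrightarrow> r \<le> c \<longrightarrow> v \<le> K"
  shows "\<exists>\<sigma> c. K_inf \<sigma> \<and> c > 0 \<and> (\<forall>r v. R r v \<longrightarrow> 0 \<le> r \<longrightarrow> v \<le> \<sigma> r + c)"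
proof -
  obtain K where K: "\<And>c r v. R r v \<Longrightarrow> r \<le> c \<Longrightarrow> v \<le> K c"
    using assms by metis
  define b where "b n = max 0 (K (real n + 2))" for n
  have b: "b n \<ge> 0" for n unfolding b_def by simp
  have \<sigma>: "K_inf (ramp_sum b)" by (rule K_inf_ramp_sum[OF b])
  have "v \<le> ramp_sum b r + max 1 (K 1)" if "R r v" "0 \<le> r" for r v
  proof (cases "r \<le> 1")
    case True
    then show ?thesis using K[OF that(1) True] K_inf_nonneg[OF \<sigma> that(2)] by linarith
  next
    case False
    define k where "k = nat \<lceil>r\<rceil> - 2"
    have "real k = of_int \<lceil>r\<rceil> - 2"
      using False unfolding k_def by (simp add: of_nat_diff le_nat_iff)
    then have k: "real k + 1 \<le> r" "r \<le> real k + 2" by linarith+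
    have "v \<le> b k" using K[OF that(1) k(2)] unfolding b_def by simp
    also have "\<dots> \<le> ramp_sum b r" by (rule ramp_sum_ge_coeff[OF b k(1)])
    finally show ?thesis by simp
  qed
  then show ?thesis using \<sigma> by (intro exI[where x = "ramp_sum b"] exI[where x = "max 1 (K 1)"]) auto
qed

lemma is_system_shift:
  assumes "is_system Dv DD \<phi>" "d \<in> DD" "0 \<le> t"
  shows "(\<lambda>s. d (t + s)) \<in> DD"
proof -
  have "(\<lambda>s. d (s + t)) \<in> DD" using assms unfolding is_system_def by blast
  then show ?thesis by (simp add: add.commute)
qed

lemma is_system_split:
  assumes "is_system Dv DD \<phi>" "d \<in> DD" "0 \<le> t0" "t0 \<le> t"
  shows "\<phi> t x d = \<phi> (t - t0) (\<phi> t0 x d) (\<lambda>s. d (t0 + s))"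
proof -
  have "\<forall>x. \<forall>d\<in>DD. \<forall>t\<ge>0. \<forall>h\<ge>0. \<phi> h (\<phi> t x d) (\<lambda>s. d (t + s)) = \<phi> (t + h) x d"
    using assms(1) unfolding is_system_def by blast
  then have "\<phi> (t - t0) (\<phi> t0 x d) (\<lambda>s. d (t0 + s)) = \<phi> (t0 + (t - t0)) x d"
    using assms(2-4) by simp
  then show ?thesis by simp
qed

lemma RFC_bound:
  assumes "RFC DD \<phi>"
  shows "\<exists>M. \<forall>x. \<forall>d\<in>DD. \<forall>t\<in>{0..\<tau>}. norm x \<le> C \<longrightarrow> norm (\<phi> t x d) \<le> M"
proof -
  obtain M where "\<forall>x. \<forall>d\<in>DD. \<forall>t\<in>{0..max 1 \<tau>}. norm x \<le> max 1 C \<longrightarrow> norm (\<phi> t x d) \<le> M"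
    using assms unfolding RFC_def by (meson less_max_iff_disj zero_less_one)
  then show ?thesis by (intro exI[where x = M]) auto
qed

lemma UGWA_reach:
  assumes "UGWA DD \<phi> A" "0 < \<epsilon>"
  shows "\<exists>\<tau>. \<forall>x. \<forall>d\<in>DD. infdist x A \<le> r \<longrightarrow> (\<exists>t\<in>{0..\<tau>}. infdist (\<phi> t x d) A \<le> \<epsilon>)"
proof -
  obtain \<tau> where "\<forall>x. \<forall>d\<in>DD. infdist x A \<le> max 1 r \<longrightarrow> (\<exists>t\<in>{0..\<tau>}. infdist (\<phi> t x d) A \<le> \<epsilon>)"
    using assms unfolding UGWA_def by (meson less_max_iff_disj zero_less_one)
  then show ?thesis by (intro exI[where x = \<tau>]) auto
qed

lemma infdist_le_norm_add:
  fixes y :: "'a::real_normed_vector"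
  assumes "a \<in> A"
  shows "infdist y A \<le> norm y + norm a"
  using infdist_le[OF assms, of y] norm_triangle_ineq4[of y a] by (simp add: dist_norm)

lemma norm_le_infdist_add:
  fixes y :: "'a::real_normed_vector"
  assumes "A \<noteq> {}" "\<And>a. a \<in> A \<Longrightarrow> norm a \<le> R"
  shows "norm y \<le> infdist y A + R"
proof -
  have "norm y - R \<le> dist y a" if "a \<in> A" for a
    using assms(2)[OF that] norm_triangle_ineq2[of y a] by (simp add: dist_norm)
  then have "norm y - R \<le> infdist y A"
    unfolding infdist_notempty[OF assms(1)] by (intro cINF_greatest assms(1))
  then show ?thesis by simp
qed

text \<open>The lower bound 1 on the return times is what lets the induction cover all of [0, \<infinity>).\<close>

lemma bounded_orbits_of_recurrent_set:
  assumes sys: "is_system Dv DD \<phi>"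
    and bound: "\<And>y d t. y \<in> S \<Longrightarrow> d \<in> DD \<Longrightarrow> t \<in> {0..T} \<Longrightarrow> norm (\<phi> t y d) \<le> M"
    and return: "\<And>y d. y \<in> S \<Longrightarrow> d \<in> DD \<Longrightarrow> \<exists>s\<in>{1..T}. \<phi> s y d \<in> S"
    and "y \<in> S" "d \<in> DD" "0 \<le> t"
  shows "norm (\<phi> t y d) \<le> M"
proof -
  have "\<forall>y d t. y \<in> S \<longrightarrow> d \<in> DD \<longrightarrow> 0 \<le> t \<longrightarrow> t \<le> real n \<longrightarrow> norm (\<phi> t y d) \<le> M" for n :: nat
  proof (induction n)
    case 0
    show ?case using bound return by fastforce
  next
    case (Suc n)
    show ?case
    proof (intro allI impI)
      fix y d t assume h: "y \<in> S" "d \<in> DD" "0 \<le> t" "t \<le> real (Suc n)"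
      obtain s where s: "s \<in> {1..T}" "\<phi> s y d \<in> S" using return[OF h(1,2)] by blast
      show "norm (\<phi> t y d) \<le> M"
      proof (cases "t \<le> s")
        case True
        then show ?thesis using bound[OF h(1,2)] s(1) h(3) by auto
      next
        case False
        have "norm (\<phi> (t - s) (\<phi> s y d) (\<lambda>u. d (s + u))) \<le> M"
          using Suc.IH is_system_shift[OF sys h(2)] s h False by auto
        then show ?thesis using is_system_split[OF sys h(2), of s t] s(1) False by auto
      qed
    qed
  qed
  then show ?thesis using assms(4-6) real_nat_ceiling_ge by blast
qed

lemma UGWA_return:
  assumes sys: "is_system Dv DD \<phi>" and rfc: "RFC DD \<phi>"
    and "bounded A" "A \<noteq> {}" and ugwa: "UGWA DD \<phi> A" and "0 < \<epsilon>"
  shows "\<exists>T. \<forall>y. \<forall>d\<in>DD. infdist y A \<le> \<epsilon> \<longrightarrow> (\<exists>s\<in>{1..T}. infdist (\<phi> s y d) A \<le> \<epsilon>)"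
proof -
  obtain R where R: "\<And>a. a \<in> A \<Longrightarrow> norm a \<le> R"
    using \<open>bounded A\<close> unfolding bounded_iff by blast
  obtain a0 where a0: "a0 \<in> A" using \<open>A \<noteq> {}\<close> by blast
  obtain M where M: "\<And>x d. d \<in> DD \<Longrightarrow> norm x \<le> \<epsilon> + R \<Longrightarrow> norm (\<phi> 1 x d) \<le> M"
    using RFC_bound[OF rfc, of 1 "\<epsilon> + R"] by (metis atLeastAtMost_iff order_refl zero_le_one)
  obtain \<tau> where \<tau>: "\<And>x d. d \<in> DD \<Longrightarrow> infdist x A \<le> M + R \<Longrightarrow> \<exists>t\<in>{0..\<tau>}. infdist (\<phi> t x d) A \<le> \<epsilon>"
    using UGWA_reach[OF ugwa \<open>0 < \<epsilon>\<close>, of "M + R"] by blast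
  have "\<exists>s\<in>{1..1 + \<tau>}. infdist (\<phi> s y d) A \<le> \<epsilon>" if y: "infdist y A \<le> \<epsilon>" and d: "d \<in> DD" for y d
  proof -
    have "norm y \<le> \<epsilon> + R" using norm_le_infdist_add[OF \<open>A \<noteq> {}\<close> R, of y] y by linarith
    then have "infdist (\<phi> 1 y d) A \<le> M + R"
      using M[OF d] infdist_le_norm_add[OF a0, of "\<phi> 1 y d"] R[OF a0] by fastforce
    then obtain t where t: "t \<in> {0..\<tau>}" "infdist (\<phi> t (\<phi> 1 y d) (\<lambda>s. d (1 + s))) A \<le> \<epsilon>"
      using \<tau> is_system_shift[OF sys d] by (meson zero_le_one)
    then show ?thesis
      using is_system_split[OF sys d, of 1 "1 + t" y] by (intro bexI[where x = "1 + t"]) auto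
  qed
  then show ?thesis by blast
qed

lemma reachable_set_bounded:
  assumes sys: "is_system Dv DD \<phi>" and rfc: "RFC DD \<phi>"
    and "bounded A" "A \<noteq> {}" and ugwa: "UGWA DD \<phi> A"
  shows "\<exists>K. \<forall>x. \<forall>d\<in>DD. \<forall>t\<ge>0. norm x \<le> c \<longrightarrow> norm (\<phi> t x d) \<le> K"
proof -
  obtain R where R: "\<And>a. a \<in> A \<Longrightarrow> norm a \<le> R"
    using \<open>bounded A\<close> unfolding bounded_iff by blast
  obtain a0 where a0: "a0 \<in> A" using \<open>A \<noteq> {}\<close> by blast
  define S where "S = {y. infdist y A \<le> 1}"
  have S_norm: "norm y \<le> 1 + R" if "y \<in> S" for y
    using norm_le_infdist_add[OF \<open>A \<noteq> {}\<close> R, of y] that unfolding S_def by simp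
  obtain T where T: "\<And>y d. y \<in> S \<Longrightarrow> d \<in> DD \<Longrightarrow> \<exists>s\<in>{1..T}. \<phi> s y d \<in> S"
    using UGWA_return[OF assms zero_less_one] unfolding S_def by blast
  obtain M where M: "\<And>x d t. d \<in> DD \<Longrightarrow> t \<in> {0..T} \<Longrightarrow> norm x \<le> 1 + R \<Longrightarrow> norm (\<phi> t x d) \<le> M"
    using RFC_bound[OF rfc, of T "1 + R"] by blast
  have orbit_S: "norm (\<phi> t y d) \<le> M" if "y \<in> S" "d \<in> DD" "0 \<le> t" for y d t
    by (rule bounded_orbits_of_recurrent_set[OF sys _ T that]) (auto intro: M S_norm)
  obtain \<tau> where \<tau>: "\<And>x d. d \<in> DD \<Longrightarrow> infdist x A \<le> c + R \<Longrightarrow> \<exists>t\<in>{0..\<tau>}. \<phi> t x d \<in> S"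
    using UGWA_reach[OF ugwa zero_less_one, of "c + R"] unfolding S_def by blast
  obtain Mc where Mc: "\<And>x d t. d \<in> DD \<Longrightarrow> t \<in> {0..\<tau>} \<Longrightarrow> norm x \<le> c \<Longrightarrow> norm (\<phi> t x d) \<le> Mc"
    using RFC_bound[OF rfc, of \<tau> c] by blast
  have "norm (\<phi> t x d) \<le> max M Mc" if x: "norm x \<le> c" and d: "d \<in> DD" and t: "0 \<le> t" for x d t
  proof -
    have "infdist x A \<le> c + R" using infdist_le_norm_add[OF a0, of x] R[OF a0] x by linarith
    then obtain t0 where t0: "t0 \<in> {0..\<tau>}" "\<phi> t0 x d \<in> S" using \<tau>[OF d] by blast
    show ?thesis
    proof (cases "t \<le> t0")
      case True
      then show ?thesis using Mc[OF d _ x, of t] t0(1) t by fastforce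
    next
      case False
      then show ?thesis
        using orbit_S[OF t0(2) is_system_shift[OF sys d, of t0], of "t - t0"] t0(1)
          is_system_split[OF sys d, of t0 t x] by auto
    qed
  qed
  then show ?thesis by blast
qed

theorem lemma21:
  fixes Dv :: "'d::real_normed_vector set"
    and DD :: "(real \<Rightarrow> 'd) set"
    and \<phi> :: "real \<Rightarrow> 'x::real_normed_vector \<Rightarrow> (real \<Rightarrow> 'd) \<Rightarrow> 'x"
    and A :: "'x set"
  assumes "is_system Dv DD \<phi>"
    and "RFC DD \<phi>"
    and "bounded A" and "A \<noteq> {}"
    and "UGWA DD \<phi> A"
  shows "lagrange_stable DD \<phi>"
proof -
  let ?R = "\<lambda>r v. \<exists>x. \<exists>d\<in>DD. \<exists>t\<ge>0. r = norm x \<and> v = norm (\<phi> t x d)"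
  have "\<exists>K. \<forall>r v. ?R r v \<longrightarrow> r \<le> c \<longrightarrow> v \<le> K" for c
    using reachable_set_bounded[OF assms, of c] by blast
  then obtain \<sigma> c where "K_inf \<sigma>" "c > 0" and \<sigma>: "\<forall>r v. ?R r v \<longrightarrow> 0 \<le> r \<longrightarrow> v \<le> \<sigma> r + c"
    using K_inf_majorant[of ?R] by blast
  moreover have "infdist (\<phi> t x d) {0} \<le> \<sigma> (infdist x {0}) + c" if "0 \<le> t" "d \<in> DD" for x t d
  proof -
    have "?R (norm x) (norm (\<phi> t x d))" using that by blast
    then show ?thesis using \<sigma> by (simp add: dist_norm)
  qed
  ultimately show ?thesis
    unfolding lagrange_stable_def by (intro exI[where x = "{0}"] exI[where x = \<sigma>] exI[where x = c]) simp
qed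

end
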